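(* Let $F$ be a random forest and $L$ a labelling of its explanation BAG $\mathcal{B}_F$. (1) If $L$ is bi-complete, then for every feature $X_i$, either $L(A_{X_i\in S_{i,j}})=\mathrm{und}$ for all feature arguments $A_{X_i\in S_{i,j}}$ of $X_i$, or exactly one feature argument of $X_i$ is labelled $\mathrm{in}$ and all other feature arguments of $X_i$ are labelled $\mathrm{out}$. (2) If $L$ is bi-stable, then for every feature $X_i$, exactly one feature argument of $X_i$ is labelled $\mathrm{in}$ and all other feature arguments of $X_i$ are labelled $\mathrm{out}$.
   Context: Features $X_1,\dots,X_k$ have domains $D_1,\dots,D_k$; each feature is categorical (finite domain) or numerical ($D_i\subseteq\mathbb{R}$). Inputs are $x\in D_1\times\dots\times D_k$; $\mathcal{C}$ is a finite set of class labels. Feature conditions are $X_i=v$ (categorical) or $X_i\le v$ (numerical); a feature literal is a condition or its negation. A rule $r$ is $\mathrm{prem}(r)\rightarrow\mathrm{conc}(r)$ with $\mathrm{prem}(r)$ a finite set of feature literals and $\mathrm{conc}(r)\in\mathcal{C}$. A decision tree $T$ is a finite set of rules such that every input satisfies the premise of exactly one rule of $T$ (the active rule). A random forest $F$ is a finite set of decision trees. Domain partition: for a categorical feature, the singletons $\{v\}$, $v\in D_i$; for a numerical feature with distinct thresholds $v_1<\dots<v_m$ occurring in conditions $X_i\le v$ in $F$, the sets $D_i\cap(-\infty,v_1]$, $D_i\cap(v_{j-1},v_j]$ ($2\le j\le m$), $D_i\cap(v_m,\infty)$; denote them $S_{i,1},\dots,S_{i,n_i}$. A BAG is $(\mathcal{A},\mathrm{Att},\mathrm{Sup})$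 with $\mathcal{A}$ finite and $\mathrm{Att},\mathrm{Sup}\subseteq\mathcal{A}\times\mathcal{A}$; $\mathrm{Att}(A)=\{B:(B,A)\in\mathrm{Att}\}$, $\mathrm{Sup}(A)=\{B:(B,A)\in\mathrm{Sup}\}$. A labelling is a map $L:\mathcal{A}\to\{\mathrm{in},\mathrm{out},\mathrm{und}\}$. The attackers of $A$ dominate its supporters if $|\{B\in\mathrm{Att}(A):L(B)=\mathrm{in}\}|>|\{B\in\mathrm{Sup}(A):L(B)\ne\mathrm{out}\}|$; the supporters dominate the attackers if $|\{B\in\mathrm{Sup}(A):L(B)=\mathrm{in}\}|>|\{B\in\mathrm{Att}(A):L(B)\ne\mathrm{out}\}|$. $L$ is bi-complete if for every argument $A$: $L(A)=\mathrm{in}$ iff ($L(B)=\mathrm{out}$ for all $B\in\mathrm{Att}(A)$ or $A$'s supporters dominate its attackers), and $L(A)=\mathrm{out}$ iff $A$'s attackers dominate its supporters. $L$ is bi-stable if it is bi-complete and labels no argument $\mathrm{und}$. The explanation BAG $\mathcal{B}_F$ has arguments: a class argument $A_y$ for each $y\in\mathcal{C}$; a rule argument $A_{T,r}$ for each $T\in F$, $r\in T$; a feature argument $A_{X_i\in S_{i,j}}$ for each feature $i$ and partition set $S_{i,j}$ (the feature arguments of $X_i$). Attacks: between any two distinct feature arguments of the same feature; from $A_{X_i\in S_{i,j}}$ to $A_{T,r}$ whenever some literal in $\mathrm{prem}(r)$ is satisfied by no value in $S_{i,j}$; from $A_{T,r}$ to $A_y$ whenever $\mathrm{conc}(r)\ne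 y$. Supports: from $A_{T,r}$ to $A_y$ whenever $\mathrm{conc}(r)=y$. No other attacks or supports. *)

theory Defs
  imports Complex_Main
begin

text \<open>The predicate num
tells which features are numerical; D i is the domain of feature i.\<close>

datatype 'c fvalue = CatV 'c | NumV real

datatype 'c cond = CEq nat 'c | CLeq nat real

datatype 'c lit = Pos "'c cond" | Neg "'c cond"

fun cond_feat :: "'c cond \<Rightarrow> nat" where
  "cond_feat (CEq i v) = i"
| "cond_feat (CLeq i t) = i"

fun lit_cond :: "'c lit \<Rightarrow> 'c cond" where
  "lit_cond (Pos c) = c"
| "lit_cond (Neg c) = c"

definition lit_feat :: "'c lit \<Rightarrow> nat" where
  "lit_feat l = cond_feat (lit_cond l)"

fun cond_sat_val :: "'c cond \<Rightarrow> 'c fvalue \<Rightarrow> bool" where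
  "cond_sat_val (CEq i v) w = (w = CatV v)"
| "cond_sat_val (CLeq i t) w = (\<exists>r. w = NumV r \<and> r \<le> t)"

fun lit_sat_val :: "'c lit \<Rightarrow> 'c fvalue \<Rightarrow> bool" where
  "lit_sat_val (Pos c) w = cond_sat_val c w"
| "lit_sat_val (Neg c) w = (\<not> cond_sat_val c w)"

definition lit_sat_input :: "'c lit \<Rightarrow> (nat \<Rightarrow> 'c fvalue) \<Rightarrow> bool" where
  "lit_sat_input l x = lit_sat_val l (x (lit_feat l))"

definition is_input :: "nat \<Rightarrow> (nat \<Rightarrow> 'c fvalue set) \<Rightarrow> (nat \<Rightarrow> 'c fvalue) \<Rightarrow> bool" where
  "is_input k D x \<longleftrightarrow> (\<forall>i<k. x i \<in> D i)"

definition wf_features :: "nat \<Rightarrow> (nat \<Rightarrow> bool) \<Rightarrow> (nat \<Rightarrow> 'c fvalue set) \<Rightarrow> bool" where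
  "wf_features k num D \<longleftrightarrow>
     (\<forall>i<k. D i \<noteq> {} \<and> (num i \<longrightarrow> D i \<subseteq> range NumV) \<and>
            (\<not> num i \<longrightarrow> finite (D i) \<and> D i \<subseteq> range CatV))"

definition wf_lit :: "nat \<Rightarrow> (nat \<Rightarrow> bool) \<Rightarrow> 'c lit \<Rightarrow> bool" where
  "wf_lit k num l \<longleftrightarrow> lit_feat l < k \<and>
     (case lit_cond l of CEq i v \<Rightarrow> \<not> num i | CLeq i t \<Rightarrow> num i)"

type_synonym ('c,'y) rule = "'c lit set \<times> 'y"   \<comment> \<open>(premise, conclusion)\<close>
type_synonym ('c,'y) tree = "('c,'y) rule set"

definition decision_tree ::
  "nat \<Rightarrow> (nat \<Rightarrow> bool) \<Rightarrow> (nat \<Rightarrow> 'c fvalue set) \<Rightarrow> 'y set \<Rightarrow> ('c,'y) tree \<Rightarrow> bool" where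
  "decision_tree k num D C T \<longleftrightarrow>
     finite T \<and>
     (\<forall>r\<in>T. finite (fst r) \<and> (\<forall>l\<in>fst r. wf_lit k num l) \<and> snd r \<in> C) \<and>
     (\<forall>x. is_input k D x \<longrightarrow> (\<exists>!r. r \<in> T \<and> (\<forall>l\<in>fst r. lit_sat_input l x)))"

definition random_forest ::
  "nat \<Rightarrow> (nat \<Rightarrow> bool) \<Rightarrow> (nat \<Rightarrow> 'c fvalue set) \<Rightarrow> 'y set \<Rightarrow> ('c,'y) tree set \<Rightarrow> bool" where
  "random_forest k num D C F \<longleftrightarrow> finite F \<and> (\<forall>T\<in>F. decision_tree k num D C T)"

definition thresholds :: "('c,'y) tree set \<Rightarrow> nat \<Rightarrow> real set" where
  "thresholds F i = {t. \<exists>T\<in>F. \<exists>r\<in>T. \<exists>l\<in>fst r. lit_cond l = CLeq i t}"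

definition ths :: "('c,'y) tree set \<Rightarrow> nat \<Rightarrow> real list" where
  "ths F i = sorted_list_of_set (thresholds F i)"

text \<open>The j-th partition set (j = 0..m, m = number of thresholds) of numerical feature i.\<close>
definition num_part :: "(nat \<Rightarrow> 'c fvalue set) \<Rightarrow> ('c,'y) tree set \<Rightarrow> nat \<Rightarrow> nat \<Rightarrow> 'c fvalue set" where
  "num_part D F i j = {w \<in> D i. \<exists>r. w = NumV r \<and>
       (j = 0 \<or> ths F i ! (j - 1) < r) \<and> (j = length (ths F i) \<or> r \<le> ths F i ! j)}"

record 'a bag =
  Args :: "'a set"
  Att :: "('a \<times> 'a) set"
  Sup :: "('a \<times> 'a) set"

datatype label = In | Out | Und

definition attackers :: "'a bag \<Rightarrow> 'a \<Rightarrow> 'a set" where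
  "attackers B a = {b. (b, a) \<in> Att B}"

definition supporters :: "'a bag \<Rightarrow> 'a \<Rightarrow> 'a set" where
  "supporters B a = {b. (b, a) \<in> Sup B}"

definition att_dominate :: "'a bag \<Rightarrow> ('a \<Rightarrow> label) \<Rightarrow> 'a \<Rightarrow> bool" where
  "att_dominate B L a \<longleftrightarrow>
     card {b \<in> attackers B a. L b = In} > card {b \<in> supporters B a. L b \<noteq> Out}"

definition sup_dominate :: "'a bag \<Rightarrow> ('a \<Rightarrow> label) \<Rightarrow> 'a \<Rightarrow> bool" where
  "sup_dominate B L a \<longleftrightarrow>
     card {b \<in> supporters B a. L b = In} > card {b \<in> attackers B a. L b \<noteq> Out}"

definition bi_complete :: "'a bag \<Rightarrow> ('a \<Rightarrow> label) \<Rightarrow> bool" where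
  "bi_complete B L \<longleftrightarrow> (\<forall>a\<in>Args B.
     (L a = In \<longleftrightarrow> ((\<forall>b\<in>attackers B a. L b = Out) \<or> sup_dominate B L a)) \<and>
     (L a = Out \<longleftrightarrow> att_dominate B L a))"

definition bi_stable :: "'a bag \<Rightarrow> ('a \<Rightarrow> label) \<Rightarrow> bool" where
  "bi_stable B L \<longleftrightarrow> bi_complete B L \<and> (\<forall>a\<in>Args B. L a \<noteq> Und)"

datatype ('c,'y) arg =
    ClassA 'y
  | RuleA "('c,'y) tree" "('c,'y) rule"
  | CatA nat 'c        \<comment> \<open>feature argument X_i in {CatV v}\<close>
  | NumA nat nat       \<comment> \<open>feature argument X_i in (j-th interval)\<close>

definition feat_args ::
  "(nat \<Rightarrow> bool) \<Rightarrow> (nat \<Rightarrow> 'c fvalue set) \<Rightarrow> ('c,'y) tree set \<Rightarrow> nat \<Rightarrow> ('c,'y) arg set" where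
  "feat_args num D F i =
     (if num i then {NumA i j | j. j \<le> length (ths F i)}
      else {CatA i v | v. CatV v \<in> D i})"

definition part_set :: "(nat \<Rightarrow> 'c fvalue set) \<Rightarrow> ('c,'y) tree set \<Rightarrow> ('c,'y) arg \<Rightarrow> 'c fvalue set" where
  "part_set D F a = (case a of CatA i v \<Rightarrow> {CatV v} | NumA i j \<Rightarrow> num_part D F i j | _ \<Rightarrow> {})"

definition expl_bag ::
  "nat \<Rightarrow> (nat \<Rightarrow> bool) \<Rightarrow> (nat \<Rightarrow> 'c fvalue set) \<Rightarrow> 'y set \<Rightarrow> ('c,'y) tree set \<Rightarrow> ('c,'y) arg bag" where
  "expl_bag k num D C F =
   \<lparr> Args = ClassA ` C \<union> {RuleA T r | T r. T \<in> F \<and> r \<in> T} \<union> (\<Union>i<k. feat_args num D F i),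
     Att = {(a, b). \<exists>i<k. a \<in> feat_args num D F i \<and> b \<in> feat_args num D F i \<and> a \<noteq> b}
         \<union> {(a, RuleA T r) | a T r. T \<in> F \<and> r \<in> T \<and>
              (\<exists>i<k. a \<in> feat_args num D F i \<and>
                 (\<exists>l\<in>fst r. lit_feat l = i \<and> (\<forall>w\<in>part_set D F a. \<not> lit_sat_val l w)))}
         \<union> {(RuleA T r, ClassA y) | T r y. T \<in> F \<and> r \<in> T \<and> y \<in> C \<and> snd r \<noteq> y},
     Sup = {(RuleA T r, ClassA y) | T r y. T \<in> F \<and> r \<in> T \<and> y \<in> C \<and> snd r = y} \<rparr>"

end

theory Submission
  imports Defs
begin

text \<open>The feature arguments of one feature attack each other pairwise, and nothing else attacks
  or supports them. In such an isolated clique, bi-completeness says that a member is out exactly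
  when some other member is in; hence at most one member is in, and if none is, all are undecided.\<close>

lemma bi_complete_clique_labels:
  assumes bc: "bi_complete B L" and fin: "finite S" and S_args: "S \<subseteq> Args B"
    and att: "\<And>a. a \<in> S \<Longrightarrow> attackers B a = S - {a}"
    and sup: "\<And>a. a \<in> S \<Longrightarrow> supporters B a = {}"
  shows "(\<forall>a\<in>S. L a = Und) \<or> (\<exists>a\<in>S. L a = In \<and> (\<forall>b\<in>S. b \<noteq> a \<longrightarrow> L b = Out))"
proof -
  have out_iff: "L a = Out \<longleftrightarrow> (\<exists>b\<in>S - {a}. L b = In)" if "a \<in> S" for a
  proof -
    have "L a = Out \<longleftrightarrow> att_dominate B L a"
      using bc S_args that unfolding bi_complete_def by blast
    also have "\<dots> \<longleftrightarrow> card {b \<in> S - {a}. L b = In} > 0"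
      unfolding att_dominate_def att[OF that] sup[OF that] by simp
    also have "\<dots> \<longleftrightarrow> (\<exists>b\<in>S - {a}. L b = In)"
      using fin by (subst card_gt_0_iff) auto
    finally show ?thesis .
  qed
  show ?thesis
  proof (cases "\<exists>a\<in>S. L a = In")
    case True
    then obtain a where "a \<in> S" "L a = In" by blast
    then show ?thesis using out_iff by blast
  next
    case False
    then have "L a = Und" if "a \<in> S" for a
      using out_iff[OF that] that by (cases "L a") auto
    then show ?thesis by blast
  qed
qed

lemma bi_stable_clique_labels:
  assumes "bi_stable B L" "finite S" "S \<noteq> {}" "S \<subseteq> Args B"
    and "\<And>a. a \<in> S \<Longrightarrow> attackers B a = S - {a}"
    and "\<And>a. a \<in> S \<Longrightarrow> supporters B a = {}"
  shows "\<exists>a\<in>S. L a = In \<and> (\<forall>b\<in>S. b \<noteq> a \<longrightarrow> L b = Out)"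
proof -
  obtain a where "a \<in> S" "L a \<noteq> Und"
    using assms(1,3,4) unfolding bi_stable_def by blast
  then show ?thesis
    using bi_complete_clique_labels[of B L S] assms unfolding bi_stable_def by blast
qed

lemma feat_args_cases:
  "a \<in> feat_args num D F i \<Longrightarrow> (\<exists>v. a = CatA i v) \<or> (\<exists>j. a = NumA i j)"
  unfolding feat_args_def by (auto split: if_splits)

lemma attackers_expl_bag_feat_arg:
  assumes a: "a \<in> feat_args num D F i" and "i < k"
  shows "attackers (expl_bag k num D C F) a = feat_args num D F i - {a}"
proof -
  have "b \<in> feat_args num D F i - {a}"
    if "(b, a) \<in> Att (expl_bag k num D C F)" for b
  proof -
    have "\<exists>i'. b \<in> feat_args num D F i' \<and> a \<in> feat_args num D F i' \<and> b \<noteq> a"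
      using that feat_args_cases[OF a] unfolding expl_bag_def by auto
    then show ?thesis
      using feat_args_cases[OF a] by (auto dest: feat_args_cases)
  qed
  moreover have "(b, a) \<in> Att (expl_bag k num D C F)" if "b \<in> feat_args num D F i - {a}" for b
    using that assms unfolding expl_bag_def by auto
  ultimately show ?thesis
    unfolding attackers_def by blast
qed

lemma supporters_expl_bag_feat_arg:
  "a \<in> feat_args num D F i \<Longrightarrow> supporters (expl_bag k num D C F) a = {}"
  by (auto simp: supporters_def expl_bag_def dest: feat_args_cases)

lemma feat_args_subset_Args:
  "i < k \<Longrightarrow> feat_args num D F i \<subseteq> Args (expl_bag k num D C F)"
  unfolding expl_bag_def by auto

lemma finite_feat_args:
  assumes "wf_features k num D" "i < k"
  shows "finite (feat_args num D F i)"
proof (cases "num i")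
  case True
  then have "feat_args num D F i = NumA i ` {..length (ths F i)}"
    by (auto simp: feat_args_def)
  then show ?thesis by simp
next
  case False
  then have "finite (D i)"
    using assms by (simp add: wf_features_def)
  then have "finite (CatV -` D i)"
    by (rule finite_vimageI) (simp add: inj_def)
  moreover have "feat_args num D F i = CatA i ` (CatV -` D i)"
    using False by (auto simp: feat_args_def)
  ultimately show ?thesis by simp
qed

lemma feat_args_nonempty:
  assumes "wf_features k num D" "i < k"
  shows "feat_args num D F i \<noteq> {}"
proof (cases "num i")
  case True
  then show ?thesis by (auto simp: feat_args_def)
next
  case False
  then obtain v where "CatV v \<in> D i"
    using assms by (auto simp: wf_features_def)
  then show ?thesis
    using False by (auto simp: feat_args_def)
qed

theorem lemma1:
  fixes k :: nat and num :: "nat \<Rightarrow> bool" and D :: "nat \<Rightarrow> 'c fvalue set"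
    and C :: "'y set" and F :: "('c,'y) tree set" and L :: "('c,'y) arg \<Rightarrow> label"
  assumes "wf_features k num D" and "finite C" and "random_forest k num D C F"
  shows "(bi_complete (expl_bag k num D C F) L \<longrightarrow>
            (\<forall>i<k. (\<forall>a\<in>feat_args num D F i. L a = Und) \<or>
                   (\<exists>a\<in>feat_args num D F i. L a = In \<and>
                      (\<forall>b\<in>feat_args num D F i. b \<noteq> a \<longrightarrow> L b = Out))))
       \<and> (bi_stable (expl_bag k num D C F) L \<longrightarrow>
            (\<forall>i<k. \<exists>a\<in>feat_args num D F i. L a = In \<and>
                      (\<forall>b\<in>feat_args num D F i. b \<noteq> a \<longrightarrow> L b = Out)))"
proof (intro conjI impI allI)
  fix i assume bc: "bi_complete (expl_bag k num D C F) L" and "i < k"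
  show "(\<forall>a\<in>feat_args num D F i. L a = Und) \<or>
         (\<exists>a\<in>feat_args num D F i. L a = In \<and>
            (\<forall>b\<in>feat_args num D F i. b \<noteq> a \<longrightarrow> L b = Out))"
    by (rule bi_complete_clique_labels[OF bc finite_feat_args[OF assms(1) \<open>i < k\<close>]
          feat_args_subset_Args[OF \<open>i < k\<close>] attackers_expl_bag_feat_arg[OF _ \<open>i < k\<close>]
          supporters_expl_bag_feat_arg])
next
  fix i assume bs: "bi_stable (expl_bag k num D C F) L" and "i < k"
  show "\<exists>a\<in>feat_args num D F i. L a = In \<and>
          (\<forall>b\<in>feat_args num D F i. b \<noteq> a \<longrightarrow> L b = Out)"
    by (rule bi_stable_clique_labels[OF bs finite_feat_args[OF assms(1) \<open>i < k\<close>]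
          feat_args_nonempty[OF assms(1) \<open>i < k\<close>] feat_args_subset_Args[OF \<open>i < k\<close>]
          attackers_expl_bag_feat_arg[OF _ \<open>i < k\<close>] supporters_expl_bag_feat_arg])
qed

end
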